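(* Assume the MDP satisfies the low-rank assumption with parameter $d$. In the infinite-sample setting, run the evaluation algorithm with weight matrices $\rho_t = d_t^{\pi^\beta}$ for $t\in[H]$ and with the infinite-sample matrix estimation subroutine. Then the output $\widehat J$ satisfies \[ \big|\widehat J - J^{\pi^\theta}\big| \le 2H\sqrt{dSA}\,\sum_{t=1}^{H}\operatorname{Dis}\big(d_t^{\pi^\beta}, d_t^{\pi^\theta}\big). \]
   Context: MDP: finite state space $\mathcal S$ with $S=|\mathcal S|$, finite action space $\mathcal A$ with $A=|\mathcal A|$, horizon $H$, transition kernels $P_t(\cdot\mid s,a)\in\Delta(\mathcal S)$, rewards $r_t:\mathcal S\times\mathcal A\to[0,1]$ for $t\in[H]$, initial state distribution $\mu_1$. A policy is $\pi=\{\pi_t:\mathcal S\to\Delta(\mathcal A)\}_{t\in[H]}$; under $\pi$, $s_1\sim\mu_1$, $a_t\sim\pi_t(\cdot\mid s_t)$, $s_{t+1}\sim P_t(\cdot\mid s_t,a_t)$. Let $d_t^\pi(s,a)=\Pr_\pi(s_t=s,a_t=a)$ and $J^\pi=\mathbb E_\pi[\sum_{t=1}^H r_t(s_t,a_t)]$. Functions on $\mathcal S\times\mathcal A$ (including distributions on $\mathcal S\times\mathcal A$) are viewed as real $S\times A$ matrices. $\pi^\theta$ is the target policy, $\pi^\beta$ the behavior policy. Low-rank assumption with parameter $d$: with $d'=\lfloor d/2\rfloor$, for every $t$, $r_t$ has rank at most $d'$, and there are real functions $u_{t,i},w_{t,i}$ such that either $P_t(s'\mid s,a)=\sum_{i=1}^{d'}u_{t,i}(s',s)w_{t,i}(a)$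 for all $s',s,a$, or $P_t(s'\mid s,a)=\sum_{i=1}^{d'}u_{t,i}(s)w_{t,i}(s',a)$ for all $s',s,a$. Notation: $\|\cdot\|_{\mathrm{op}}$ is the largest singular value, $\|M\|_\infty=\max_{i,j}|M_{ij}|$, $\|M\|_{\max}=\min_{U,V:\,M=UV^\top}\|U\|_{2\to\infty}\|V\|_{2\to\infty}$ where $\|\cdot\|_{2\to\infty}$ is the maximum row Euclidean norm; $\mathbb 1_M$ is the $0/1$ matrix indicating $\operatorname{supp}(M)=\{(i,j):M_{ij}\neq0\}$; $\circ$ is the entrywise product. Operator discrepancy: for $p,q\in\Delta(\mathcal S\times\mathcal A)$, $\operatorname{Dis}(p,q)=\min\{\|g-q\|_{\mathrm{op}}: g\in\Delta(\mathcal S\times\mathcal A),\ \operatorname{supp}(g)\subseteq\operatorname{supp}(p)\}$. Evaluation algorithm (inputs: target policy $\pi^\theta$, $\mu_1$, weight matrices $\rho_t$, estimated transitions $\widehat P_t$, subroutine $\mathrm{ME}$): set $\widehat Q_{H+1}=0$; for $t=H,H-1,\dots,1$: set $Z_t(s,a)=r_t(s,a)+\sum_{s',a'}\widehat P_t(s'\mid s,a)\pi^\theta_{t+1}(a'\mid s')\widehat Q_{t+1}(s',a')$ for $(s,a)\in\operatorname{supp}(\rho_t)$, then $\widehat Q_t=\mathrm{ME}(\rho_t,Z_t)$. Output $\widehat J=\sum_{s,a}\mu_1(s)\pi_1^\theta(a\mid s)\widehat Q_1(s,a)$. (For $t=H$ the sum vanishes since $\widehat Q_{H+1}=0$.) Define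 also $Y_t(s,a)=r_t(s,a)+\sum_{s',a'}P_t(s'\mid s,a)\pi^\theta_{t+1}(a'\mid s')\widehat Q_{t+1}(s',a')$ for all $(s,a)$. Infinite-sample setting: $\widehat P_t(\cdot\mid s,a)=P_t(\cdot\mid s,a)$ for all $(s,a)\in\operatorname{supp}(d_t^{\pi^\beta})$ (so $Z_t=Y_t$ on $\operatorname{supp}(\rho_t)$ when $\rho_t=d_t^{\pi^\beta}$), and the infinite-sample subroutine $\mathrm{ME}(\rho_t,Y_t)$ returns a minimizer of $\|M\|_{\max}$ over $M\in\mathbb R^{S\times A}$ subject to $\mathbb 1_{\rho_t}\circ M=\mathbb 1_{\rho_t}\circ Y_t$ and $\|M\|_\infty\le H-t+1$. *)

theory Defs
  imports "HOL-Analysis.Analysis"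
begin

definition mat_of :: "('s::finite \<Rightarrow> 'a::finite \<Rightarrow> real) \<Rightarrow> real^'a^'s" where
  "mat_of M = (\<chi> s. \<chi> a. M s a)"

text \<open>Largest singular value = Euclidean operator norm.\<close>
definition opnorm :: "('s::finite \<Rightarrow> 'a::finite \<Rightarrow> real) \<Rightarrow> real" where
  "opnorm M = onorm (\<lambda>x. mat_of M *v x)"

definition entrymax :: "('s::finite \<Rightarrow> 'a::finite \<Rightarrow> real) \<Rightarrow> real" where
  "entrymax M = Max {\<bar>M s a\<bar> | s a. True}"

definition two_inf :: "nat \<Rightarrow> ('r::finite \<Rightarrow> nat \<Rightarrow> real) \<Rightarrow> real" where
  "two_inf k U = Max (range (\<lambda>x. sqrt (\<Sum>i<k. (U x i)^2)))"

definition maxnorm :: "('s::finite \<Rightarrow> 'a::finite \<Rightarrow> real) \<Rightarrow> real" where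
  "maxnorm M = Inf {two_inf k U * two_inf k V | k U V.
      \<forall>s a. M s a = (\<Sum>i<k. U s i * V a i)}"

definition supp :: "('s \<Rightarrow> 'a \<Rightarrow> real) \<Rightarrow> ('s \<times> 'a) set" where
  "supp M = {(s, a). M s a \<noteq> 0}"

definition is_dist :: "('s::finite \<Rightarrow> 'a::finite \<Rightarrow> real) \<Rightarrow> bool" where
  "is_dist g \<longleftrightarrow> (\<forall>s a. g s a \<ge> 0) \<and> (\<Sum>s\<in>UNIV. \<Sum>a\<in>UNIV. g s a) = 1"

definition Dis :: "('s::finite \<Rightarrow> 'a::finite \<Rightarrow> real) \<Rightarrow> ('s \<Rightarrow> 'a \<Rightarrow> real) \<Rightarrow> real" where
  "Dis p q = Inf {opnorm (\<lambda>s a. g s a - q s a) | g. is_dist g \<and> supp g \<subseteq> supp p}"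

definition is_policy :: "nat \<Rightarrow> (nat \<Rightarrow> 's::finite \<Rightarrow> 'a::finite \<Rightarrow> real) \<Rightarrow> bool" where
  "is_policy H \<pi> \<longleftrightarrow> (\<forall>t\<in>{1..H}. \<forall>s. (\<forall>a. \<pi> t s a \<ge> 0) \<and> (\<Sum>a\<in>UNIV. \<pi> t s a) = 1)"

definition is_transition :: "nat \<Rightarrow> (nat \<Rightarrow> 's::finite \<Rightarrow> 'a::finite \<Rightarrow> 's \<Rightarrow> real) \<Rightarrow> bool" where
  "is_transition H P \<longleftrightarrow> (\<forall>t\<in>{1..H}. \<forall>s a. (\<forall>s'. P t s a s' \<ge> 0) \<and> (\<Sum>s'\<in>UNIV. P t s a s') = 1)"

text \<open>Occupancy measure d_t^\<pi>(s,a) = Pr(s_t = s, a_t = a), for t \<ge> 1.\<close>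
fun occ :: "('s::finite \<Rightarrow> real) \<Rightarrow> (nat \<Rightarrow> 's \<Rightarrow> 'a::finite \<Rightarrow> 's \<Rightarrow> real)
            \<Rightarrow> (nat \<Rightarrow> 's \<Rightarrow> 'a \<Rightarrow> real) \<Rightarrow> nat \<Rightarrow> 's \<Rightarrow> 'a \<Rightarrow> real" where
  "occ \<mu> P \<pi> 0 s a = 0"
| "occ \<mu> P \<pi> (Suc 0) s a = \<mu> s * \<pi> 1 s a"
| "occ \<mu> P \<pi> (Suc (Suc t)) s' a' =
     (\<Sum>s\<in>UNIV. \<Sum>a\<in>UNIV. occ \<mu> P \<pi> (Suc t) s a * P (Suc t) s a s') * \<pi> (Suc (Suc t)) s' a'"

definition Jval :: "nat \<Rightarrow> ('s::finite \<Rightarrow> real) \<Rightarrow> (nat \<Rightarrow> 's \<Rightarrow> 'a::finite \<Rightarrow> 's \<Rightarrow> real)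
            \<Rightarrow> (nat \<Rightarrow> 's \<Rightarrow> 'a \<Rightarrow> real) \<Rightarrow> (nat \<Rightarrow> 's \<Rightarrow> 'a \<Rightarrow> real) \<Rightarrow> real" where
  "Jval H \<mu> P r \<pi> = (\<Sum>t=1..H. \<Sum>s\<in>UNIV. \<Sum>a\<in>UNIV. occ \<mu> P \<pi> t s a * r t s a)"

definition low_rank :: "nat \<Rightarrow> nat \<Rightarrow> (nat \<Rightarrow> 's::finite \<Rightarrow> 'a::finite \<Rightarrow> 's \<Rightarrow> real)
            \<Rightarrow> (nat \<Rightarrow> 's \<Rightarrow> 'a \<Rightarrow> real) \<Rightarrow> bool" where
  "low_rank d H P r \<longleftrightarrow> (\<forall>t\<in>{1..H}.
      rank (mat_of (r t)) \<le> d div 2 \<and>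
      ((\<exists>u w. \<forall>s' s a. P t s a s' = (\<Sum>i=1..d div 2. u i s' s * w i a)) \<or>
       (\<exists>u w. \<forall>s' s a. P t s a s' = (\<Sum>i=1..d div 2. u i s * w i s' a))))"

definition ME_feasible :: "('s::finite \<Rightarrow> 'a::finite \<Rightarrow> real) \<Rightarrow> ('s \<Rightarrow> 'a \<Rightarrow> real) \<Rightarrow> real
            \<Rightarrow> ('s \<Rightarrow> 'a \<Rightarrow> real) \<Rightarrow> bool" where
  "ME_feasible \<rho> Y c M \<longleftrightarrow> (\<forall>(s,a)\<in>supp \<rho>. M s a = Y s a) \<and> entrymax M \<le> c"

definition ME_inf :: "('s::finite \<Rightarrow> 'a::finite \<Rightarrow> real) \<Rightarrow> ('s \<Rightarrow> 'a \<Rightarrow> real) \<Rightarrow> real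
            \<Rightarrow> ('s \<Rightarrow> 'a \<Rightarrow> real) \<Rightarrow> bool" where
  "ME_inf \<rho> Y c M \<longleftrightarrow> ME_feasible \<rho> Y c M \<and>
      (\<forall>M'. ME_feasible \<rho> Y c M' \<longrightarrow> maxnorm M \<le> maxnorm M')"

end

theory Submission
  imports Defs "Jordan_Normal_Form.Determinant"
begin

(*
  Let Y_t be the exact Bellman backup of the estimate Qhat_(t+1). The estimation error telescopes
  along the horizon into the sum over t of <d_t^theta, Qhat_t - Y_t>. As Qhat_t and Y_t agree on the
  support of d_t^beta, for every distribution g supported there the t-th term equals
  <g - d_t^theta, Y_t - Qhat_t>, and the trace duality |<D, M>| <= |D|_op sqrt(SA) |M|_max bounds it
  by |g - d_t^theta|_op sqrt(SA) (|Y_t|_max + |Qhat_t|_max). Minimality of the estimate gives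
  |Qhat_t|_max <= |Y_t|_max, and under the low-rank assumption Y_t has rank at most d and entries at
  most H, so |Y_t|_max <= sqrt(d) H.
  The bound |M|_max <= sqrt(rank M) |M|_inf comes from John's position: if M = U V^T with k columns,
  a linear map T of maximal determinant among those sending the rows of U into the unit ball
  satisfies |z|^2 <= k max_x <T x, z>^2, and this bounds the rows of the dual factor.
*)

section \<open>Linear algebra in coordinates\<close>

text \<open>Square matrices and vectors of dimension k are functions on nat of which only the entries
  below k matter: the dimension is the length of a factorization and varies, so type-indexed
  vectors do not fit.\<close>

definition mat_app :: "nat \<Rightarrow> (nat \<Rightarrow> nat \<Rightarrow> real) \<Rightarrow> (nat \<Rightarrow> real) \<Rightarrow> nat \<Rightarrow> real" where
  "mat_app k T x = (\<lambda>i. \<Sum>j<k. T i j * x j)"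

definition dotp :: "nat \<Rightarrow> (nat \<Rightarrow> real) \<Rightarrow> (nat \<Rightarrow> real) \<Rightarrow> real" where
  "dotp k x y = (\<Sum>i<k. x i * y i)"

definition mat_prod :: "nat \<Rightarrow> (nat \<Rightarrow> nat \<Rightarrow> real) \<Rightarrow> (nat \<Rightarrow> nat \<Rightarrow> real) \<Rightarrow> nat \<Rightarrow> nat \<Rightarrow> real" where
  "mat_prod k A B = (\<lambda>i j. \<Sum>l<k. A i l * B l j)"

definition id_fun :: "nat \<Rightarrow> nat \<Rightarrow> real" where
  "id_fun = (\<lambda>i j. if i = j then 1 else 0)"

definition det_fun :: "nat \<Rightarrow> (nat \<Rightarrow> nat \<Rightarrow> real) \<Rightarrow> real" where
  "det_fun k T = Determinant.det (Matrix.mat k k (\<lambda>(i, j). T i j))"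

lemma det_fun_cong:
  "(\<And>i j. i < k \<Longrightarrow> j < k \<Longrightarrow> A i j = B i j) \<Longrightarrow> det_fun k A = det_fun k B"
  unfolding det_fun_def by (rule arg_cong[where f = Determinant.det]) (rule eq_matI, auto)

lemma det_fun_mat_prod: "det_fun k (mat_prod k A B) = det_fun k A * det_fun k B"
proof -
  have "Matrix.mat k k (\<lambda>(i, j). mat_prod k A B i j) =
        Matrix.mat k k (\<lambda>(i, j). A i j) * Matrix.mat k k (\<lambda>(i, j). B i j)"
    by (rule eq_matI) (auto simp: mat_prod_def scalar_prod_def atLeast0LessThan intro!: sum.cong)
  thus ?thesis unfolding det_fun_def by (simp add: det_mult[of _ k])
qed

lemma det_fun_diag: "det_fun k (\<lambda>i j. if i = j then d i else 0) = (\<Prod>i<k. d i)"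
proof -
  let ?A = "Matrix.mat k k (\<lambda>(i, j). if i = j then d i else 0)"
  have "Determinant.det ?A = prod_list (diag_mat ?A)"
    by (rule det_upper_triangular[of _ k]) (auto simp: upper_triangular_def)
  thus ?thesis by (simp add: det_fun_def prod_list_diag_prod atLeast0LessThan)
qed

lemma det_fun_id: "det_fun k id_fun = 1"
  using det_fun_diag[of k "\<lambda>_. 1"] by (simp add: id_fun_def)

lemma det_fun_leibniz:
  "det_fun k (\<lambda>i j. f (i, j)) = (\<Sum>p | p permutes {0..<k}. signof p * (\<Prod>i=0..<k. f (i, p i)))"
  unfolding det_fun_def Determinant.det_def
  by (auto intro!: sum.cong prod.cong dest: permutes_in_image)

lemma sum_id_fun_left: "i < k \<Longrightarrow> (\<Sum>l<k. id_fun i l * f l) = f i"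
  by (simp add: id_fun_def if_distrib[of "\<lambda>x. x * _"] cong: if_cong)

lemma sum_id_fun_right: "j < k \<Longrightarrow> (\<Sum>l<k. f l * id_fun l j) = f j"
  by (simp add: id_fun_def if_distrib[of "\<lambda>x. _ * x"] cong: if_cong)

lemma mat_app_mat_prod: "mat_app k (mat_prod k A B) x = mat_app k A (mat_app k B x)"
  unfolding mat_app_def mat_prod_def
  by (rule ext) (simp add: sum_distrib_left sum_distrib_right mult.assoc, rule sum.swap)

lemma mat_app_id: "i < k \<Longrightarrow> mat_app k id_fun y i = y i"
  unfolding mat_app_def by (rule sum_id_fun_left)

lemma mat_app_diag: "i < k \<Longrightarrow> mat_app k (\<lambda>i j. if i = j then d i else 0) y i = d i * y i"
  unfolding mat_app_def by (simp add: if_distrib[of "\<lambda>x. x * _"] cong: if_cong)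

lemma dotp_cong:
  "(\<And>i. i < k \<Longrightarrow> x i = x' i) \<Longrightarrow> (\<And>i. i < k \<Longrightarrow> y i = y' i) \<Longrightarrow> dotp k x y = dotp k x' y'"
  unfolding dotp_def by simp

lemma dotp_commute: "dotp k x y = dotp k y x"
  unfolding dotp_def by (simp add: mult.commute)

lemma dotp_self_nonneg: "0 \<le> dotp k x x"
  unfolding dotp_def by (auto intro: sum_nonneg)

lemma dotp_mat_app_transpose: "dotp k (mat_app k T x) y = dotp k x (mat_app k (\<lambda>i j. T j i) y)"
  unfolding mat_app_def dotp_def
  by (simp add: sum_distrib_left sum_distrib_right mult_ac, rule sum.swap)

lemma left_inverse_if_det_fun_nonzero:
  assumes "det_fun k T \<noteq> 0"
  obtains B where "\<And>x i. i < k \<Longrightarrow> mat_app k B (mat_app k T x) i = x i"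
proof -
  let ?A = "Matrix.mat k k (\<lambda>(i, j). T i j)"
  define B where "B = (\<lambda>i j. adj_mat ?A $$ (i, j) / det_fun k T)"
  have BT: "mat_prod k B T i j = id_fun i j" if "i < k" "j < k" for i j
  proof -
    have "(adj_mat ?A * ?A) $$ (i, j) = (Determinant.det ?A \<cdot>\<^sub>m 1\<^sub>m k) $$ (i, j)"
      using adj_mat(3)[of ?A k] by simp
    hence "(\<Sum>l<k. adj_mat ?A $$ (i, l) * T l j) = det_fun k T * id_fun i j"
      using that adj_mat(1)[of ?A k] by (auto simp: scalar_prod_def atLeast0LessThan det_fun_def id_fun_def)
    thus ?thesis using assms unfolding mat_prod_def B_def
      by (simp add: sum_divide_distrib[symmetric])
  qed
  have "mat_app k B (mat_app k T x) i = x i" if "i < k" for x i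
  proof -
    have "mat_app k B (mat_app k T x) i = (\<Sum>j<k. id_fun i j * x j)"
      unfolding mat_app_mat_prod[symmetric] using BT that by (simp add: mat_app_def)
    thus ?thesis using sum_id_fun_left[OF that] by simp
  qed
  thus ?thesis using that by blast
qed

lemma reflection_mat_prod_self:
  assumes v: "dotp k v v \<noteq> 0" and "i < k" "j < k"
  defines "R \<equiv> \<lambda>i j. id_fun i j - 2 / dotp k v v * v i * v j"
  shows "mat_prod k R R i j = id_fun i j"
proof -
  define c where "c = 2 / dotp k v v"
  have "mat_prod k R R i j = (\<Sum>l<k. id_fun i l * id_fun l j) - c * v i * (\<Sum>l<k. v l * id_fun l j)
      - c * v j * (\<Sum>l<k. id_fun i l * v l) + c * c * v i * v j * dotp k v v"
    unfolding mat_prod_def R_def c_def[symmetric]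
    by (simp add: dotp_def algebra_simps sum.distrib sum_subtractf sum_distrib_left)
  also have "c * c * v i * v j * dotp k v v = 2 * c * v i * v j"
    using v by (simp add: c_def)
  finally show ?thesis
    using assms by (simp add: sum_id_fun_left sum_id_fun_right)
qed

lemma symmetric_involution_orthogonal:
  assumes sym: "(\<lambda>i j. Q j i) = Q" and QQ: "\<And>i j. i < k \<Longrightarrow> j < k \<Longrightarrow> mat_prod k Q Q i j = id_fun i j"
  shows "det_fun k Q ^ 2 = 1" "dotp k (mat_app k Q y) (mat_app k Q y) = dotp k y y"
proof -
  have "det_fun k Q * det_fun k Q = 1"
    using det_fun_cong[of k "mat_prod k Q Q" id_fun] QQ by (simp add: det_fun_mat_prod det_fun_id)
  thus "det_fun k Q ^ 2 = 1"
    by (simp add: power2_eq_square)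
  have "dotp k (mat_app k Q y) (mat_app k Q y) = dotp k y (mat_app k (mat_prod k Q Q) y)"
    using sym by (simp add: dotp_mat_app_transpose mat_app_mat_prod)
  also have "\<dots> = dotp k y y"
    by (rule dotp_cong) (simp_all add: mat_app_def QQ sum_id_fun_left)
  finally show "dotp k (mat_app k Q y) (mat_app k Q y) = dotp k y y" .
qed

lemma exists_orthogonal_first_row:
  assumes k: "0 < k" and e: "dotp k e e = 1"
  obtains Q where "det_fun k Q ^ 2 = 1" "\<And>y. dotp k (mat_app k Q y) (mat_app k Q y) = dotp k y y"
    "\<And>y. mat_app k Q y 0 = dotp k e y"
proof -
  define v where "v = (\<lambda>i. e i - id_fun i 0)"
  have dotp_v: "dotp k v y = dotp k e y - y 0" for y
    unfolding v_def dotp_def using sum_id_fun_right[OF k, of y] by (simp add: algebra_simps sum_subtractf)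
  show ?thesis
  proof (cases "dotp k v v = 0")
    case True
    hence "\<forall>i\<in>{..<k}. v i * v i = 0"
      unfolding dotp_def by (subst (asm) sum_nonneg_eq_0_iff) auto
    hence "mat_app k id_fun y 0 = dotp k e y" for y
      using dotp_v[of y] mat_app_id[OF k] by (simp add: dotp_def)
    moreover have "(\<lambda>i j. id_fun j i) = id_fun"
      by (auto simp: id_fun_def fun_eq_iff)
    moreover have "mat_prod k id_fun id_fun i j = id_fun i j" if "i < k" "j < k" for i j
      unfolding mat_prod_def using sum_id_fun_left[OF that(1)] .
    ultimately show ?thesis
      using symmetric_involution_orthogonal[of id_fun k] that by blast
  next
    case False
    define c where "c = 2 / dotp k v v"
    define Q where "Q = (\<lambda>i j. id_fun i j - c * v i * v j)"
    have "mat_app k Q y 0 = dotp k e y" for y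
    proof -
      have "c * v 0 = -1"
        using False dotp_v[of v] dotp_v[of e] e unfolding v_def id_fun_def c_def
        by (simp add: field_simps dotp_commute)
      moreover have "mat_app k Q y 0 = (\<Sum>j<k. id_fun 0 j * y j) - c * v 0 * dotp k v y"
        unfolding mat_app_def Q_def dotp_def by (simp add: algebra_simps sum_subtractf sum_distrib_left)
      ultimately show ?thesis
        using dotp_v[of y] sum_id_fun_left[OF k, of y] by simp
    qed
    moreover have "(\<lambda>i j. Q j i) = Q"
      unfolding Q_def id_fun_def by (auto simp: fun_eq_iff)
    moreover have "mat_prod k Q Q i j = id_fun i j" if "i < k" "j < k" for i j
      unfolding Q_def c_def using reflection_mat_prod_self[OF False that] .
    ultimately show ?thesis
      using symmetric_involution_orthogonal[of Q k] that by blast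
  qed
qed

lemma exists_stretch_along:
  assumes k: "0 < k" and e: "dotp k e e = 1" and a: "0 < a" and b: "0 < b"
  obtains N where "det_fun k N ^ 2 = a ^ k * b"
    "\<And>y. dotp k (mat_app k N y) (mat_app k N y) = a * (dotp k y y + (b - 1) * (dotp k e y)\<^sup>2)"
proof -
  obtain Q where Q: "det_fun k Q ^ 2 = 1" "\<And>y. dotp k (mat_app k Q y) (mat_app k Q y) = dotp k y y"
    "\<And>y. mat_app k Q y 0 = dotp k e y"
    using exists_orthogonal_first_row[OF k e] by blast
  define d where "d = (\<lambda>i::nat. if i = 0 then sqrt (a * b) else sqrt a)"
  define D where "D = (\<lambda>i j. if i = j then d i else (0::real))"
  define N where "N = mat_prod k Q (mat_prod k D Q)"
  obtain k' where k': "k = Suc k'"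
    using k by (cases k) auto
  have "det_fun k N ^ 2 = det_fun k D ^ 2"
    using Q(1) unfolding N_def by (simp add: det_fun_mat_prod power_mult_distrib)
  also have "\<dots> = (sqrt (a * b))\<^sup>2 * ((sqrt a)\<^sup>2) ^ k'"
    unfolding D_def det_fun_diag k' prod.lessThan_Suc_shift
    by (simp add: d_def power_mult_distrib power_mult[symmetric] mult.commute[of 2])
  also have "\<dots> = a ^ k * b"
    using a b by (simp add: k')
  finally have det: "det_fun k N ^ 2 = a ^ k * b" .
  have "dotp k (mat_app k N y) (mat_app k N y) = a * (dotp k y y + (b - 1) * (dotp k e y)\<^sup>2)" for y
  proof -
    define w where "w = mat_app k Q y"
    have "dotp k (mat_app k N y) (mat_app k N y) = dotp k (mat_app k D w) (mat_app k D w)"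
      unfolding N_def mat_app_mat_prod Q(2) w_def ..
    also have "\<dots> = (\<Sum>i<k. (d i)\<^sup>2 * (w i)\<^sup>2)"
      unfolding dotp_def D_def by (rule sum.cong) (auto simp: mat_app_diag power2_eq_square)
    also have "\<dots> = a * (dotp k w w + (b - 1) * (w 0)\<^sup>2)"
      unfolding dotp_def k' sum.lessThan_Suc_shift using a b
      by (simp add: d_def algebra_simps power2_eq_square sum_distrib_left)
    finally show ?thesis
      unfolding w_def Q(2,3) .
  qed
  with det show ?thesis
    using that by blast
qed

section \<open>John's position\<close>

definition maps_into_unit_ball :: "nat \<Rightarrow> (nat \<Rightarrow> real) set \<Rightarrow> (nat \<Rightarrow> nat \<Rightarrow> real) \<Rightarrow> bool" where
  "maps_into_unit_ball k X T \<longleftrightarrow> (\<forall>x\<in>X. dotp k (mat_app k T x) (mat_app k T x) \<le> 1)"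

lemma maps_into_unit_ball_cong:
  "(\<And>i j. i < k \<Longrightarrow> j < k \<Longrightarrow> T i j = T' i j) \<Longrightarrow> maps_into_unit_ball k X T = maps_into_unit_ball k X T'"
  unfolding maps_into_unit_ball_def dotp_def mat_app_def by simp

lemma maps_into_unit_ball_entry_bound:
  assumes T: "maps_into_unit_ball k X T" and eps: "0 < \<epsilon>" and ij: "i < k" "j < k"
    and basis: "(\<lambda>l. if l = j then \<epsilon> else 0) \<in> X"
  shows "\<bar>T i j\<bar> \<le> 1 / \<epsilon>"
proof -
  have "mat_app k T (\<lambda>l. if l = j then \<epsilon> else 0) = (\<lambda>i. T i j * \<epsilon>)"
    unfolding mat_app_def using ij by (simp add: if_distrib[of "\<lambda>x. _ * x"] cong: if_cong)
  hence "(\<Sum>i'<k. (T i' j * \<epsilon>)\<^sup>2) \<le> 1"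
    using T basis unfolding maps_into_unit_ball_def dotp_def by (force simp: power2_eq_square)
  moreover have "(T i j * \<epsilon>)\<^sup>2 \<le> (\<Sum>i'<k. (T i' j * \<epsilon>)\<^sup>2)"
    by (rule member_le_sum) (use ij in auto)
  ultimately have "(T i j * \<epsilon>)\<^sup>2 \<le> 1"
    by linarith
  hence "\<bar>T i j * \<epsilon>\<bar> \<le> 1"
    by (simp add: abs_square_le_1)
  thus ?thesis
    using eps by (simp add: abs_mult field_simps)
qed

lemma scaled_id_maps_into_unit_ball:
  assumes "finite X"
  obtains T where "maps_into_unit_ball k X T" "det_fun k T \<noteq> 0"
proof
  define \<eta> where "\<eta> = 1 / sqrt (1 + (\<Sum>x\<in>X. dotp k x x))"
  define T :: "nat \<Rightarrow> nat \<Rightarrow> real" where "T = (\<lambda>i j. if i = j then \<eta> else 0)"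
  have S: "0 \<le> (\<Sum>x\<in>X. dotp k x x)"
    by (auto intro: sum_nonneg dotp_self_nonneg)
  show "det_fun k T \<noteq> 0"
    unfolding T_def det_fun_diag \<eta>_def using S by simp
  show "maps_into_unit_ball k X T"
    unfolding maps_into_unit_ball_def
  proof
    fix x assume x: "x \<in> X"
    have "dotp k (mat_app k T x) (mat_app k T x) = \<eta>\<^sup>2 * dotp k x x"
      unfolding dotp_def T_def by (simp add: mat_app_diag sum_distrib_left power2_eq_square mult_ac)
    also have "\<dots> = dotp k x x / (1 + (\<Sum>x\<in>X. dotp k x x))"
      unfolding \<eta>_def using S by (simp add: power_divide)
    also have "\<dots> \<le> 1"
      using member_le_sum[of x X "\<lambda>x. dotp k x x", OF x dotp_self_nonneg assms] S by simp
    finally show "dotp k (mat_app k T x) (mat_app k T x) \<le> 1" .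
  qed
qed

text \<open>Matrices as points of a product space, so that compactness arguments apply.\<close>

definition mat_topology :: "nat \<Rightarrow> (nat \<times> nat \<Rightarrow> real) topology" where
  "mat_topology k = product_topology (\<lambda>_. euclideanreal) ({..<k} \<times> {..<k})"

definition unit_ball_maps :: "nat \<Rightarrow> (nat \<Rightarrow> real) set \<Rightarrow> (nat \<times> nat \<Rightarrow> real) set" where
  "unit_ball_maps k X = {f \<in> topspace (mat_topology k). maps_into_unit_ball k X (\<lambda>i j. f (i, j))}"

lemma restrict_in_unit_ball_maps:
  "maps_into_unit_ball k X T \<Longrightarrow> restrict (\<lambda>(i, j). T i j) ({..<k} \<times> {..<k}) \<in> unit_ball_maps k X"
  using maps_into_unit_ball_cong[of k "\<lambda>i j. restrict (\<lambda>(i, j). T i j) ({..<k} \<times> {..<k}) (i, j)" T X]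
  unfolding unit_ball_maps_def mat_topology_def by simp

lemma continuous_map_mat_entry:
  "i < k \<Longrightarrow> j < k \<Longrightarrow> continuous_map (mat_topology k) euclideanreal (\<lambda>f. f (i, j))"
  unfolding mat_topology_def by (rule continuous_map_product_projection) auto

lemma compactin_unit_ball_maps:
  assumes k: "0 < k" and eps: "0 < \<epsilon>"
    and basis: "\<And>j. j < k \<Longrightarrow> (\<lambda>i. if i = j then \<epsilon> else 0) \<in> X"
  shows "compactin (mat_topology k) (unit_ball_maps k X)"
proof -
  have "X \<noteq> {}"
    using basis[OF k] by blast
  hence eq: "unit_ball_maps k X = (\<Inter>x\<in>X. {f \<in> topspace (mat_topology k).
      dotp k (mat_app k (\<lambda>i j. f (i, j)) x) (mat_app k (\<lambda>i j. f (i, j)) x) \<in> {..1}})"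
    unfolding unit_ball_maps_def maps_into_unit_ball_def by auto
  moreover have cont: "continuous_map (mat_topology k) euclideanreal
      (\<lambda>f. dotp k (mat_app k (\<lambda>i j. f (i, j)) x) (mat_app k (\<lambda>i j. f (i, j)) x))" for x
    unfolding dotp_def mat_app_def
    by (intro continuous_map_sum continuous_map_real_mult continuous_map_mat_entry
        continuous_map_canonical_const finite_lessThan) auto
  ultimately have "closedin (mat_topology k) (unit_ball_maps k X)"
    unfolding eq by (intro closedin_INT[OF \<open>X \<noteq> {}\<close>] closedin_continuous_map_preimage[OF cont]) simp
  moreover have "unit_ball_maps k X \<subseteq> ({..<k} \<times> {..<k}) \<rightarrow>\<^sub>E {-1/\<epsilon>..1/\<epsilon>}"
  proof
    fix f assume f: "f \<in> unit_ball_maps k X"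
    show "f \<in> ({..<k} \<times> {..<k}) \<rightarrow>\<^sub>E {-1/\<epsilon>..1/\<epsilon>}"
    proof (rule PiE_I)
      fix ij assume "ij \<in> {..<k} \<times> {..<k}"
      then obtain i j where ij: "ij = (i, j)" "i < k" "j < k"
        by auto
      have "\<bar>f (i, j)\<bar> \<le> 1 / \<epsilon>"
        using f maps_into_unit_ball_entry_bound[where T = "\<lambda>i j. f (i, j)", OF _ eps ij(2,3) basis[OF ij(3)]]
        by (simp add: unit_ball_maps_def)
      thus "f ij \<in> {-1/\<epsilon>..1/\<epsilon>}"
        using ij by (simp add: abs_le_iff)
    next
      fix ij assume "ij \<notin> {..<k} \<times> {..<k}"
      thus "f ij = undefined"
        using f by (auto simp: unit_ball_maps_def mat_topology_def)
    qed
  qed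
  moreover have "compactin (mat_topology k) (({..<k} \<times> {..<k}) \<rightarrow>\<^sub>E {-1/\<epsilon>..1/\<epsilon>})"
    unfolding mat_topology_def by (subst compactin_PiE) auto
  ultimately show ?thesis
    by (meson closed_compactin)
qed

lemma max_det_unit_ball_map_exists:
  assumes k: "0 < k" and eps: "0 < \<epsilon>"
    and basis: "\<And>j. j < k \<Longrightarrow> (\<lambda>i. if i = j then \<epsilon> else 0) \<in> X"
    and T0: "maps_into_unit_ball k X T0"
  obtains T where "maps_into_unit_ball k X T"
    "\<And>T'. maps_into_unit_ball k X T' \<Longrightarrow> det_fun k T' ^ 2 \<le> det_fun k T ^ 2"
proof -
  let ?det2 = "\<lambda>f. det_fun k (\<lambda>i j. f (i, j)) ^ 2"
  have cont: "continuous_map (mat_topology k) euclideanreal ?det2"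
    unfolding det_fun_leibniz
    by (intro continuous_map_sum continuous_map_real_pow continuous_map_real_mult continuous_map_prod
        continuous_map_mat_entry continuous_map_canonical_const finite_lessThan finite_atLeastLessThan)
      (auto simp: finite_permutations dest: permutes_in_image)
  have "compactin euclideanreal (?det2 ` unit_ball_maps k X)"
    using compactin_unit_ball_maps[OF k eps basis] cont by (rule image_compactin)
  hence "compact (?det2 ` unit_ball_maps k X)"
    by simp
  moreover have "unit_ball_maps k X \<noteq> {}"
    using restrict_in_unit_ball_maps[OF T0] by blast
  ultimately obtain f where f: "f \<in> unit_ball_maps k X" "\<And>g. g \<in> unit_ball_maps k X \<Longrightarrow> ?det2 g \<le> ?det2 f"
    using compact_attains_sup[of "?det2 ` unit_ball_maps k X"] by auto
  have det_restrict: "det_fun k (\<lambda>i j. restrict (\<lambda>(i, j). T i j) ({..<k} \<times> {..<k}) (i, j)) = det_fun k T" for T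
    by (rule det_fun_cong) simp
  show ?thesis
  proof (rule that[of "\<lambda>i j. f (i, j)"])
    show "maps_into_unit_ball k X (\<lambda>i j. f (i, j))"
      using f(1) unfolding unit_ball_maps_def by simp
    show "det_fun k T' ^ 2 \<le> det_fun k (\<lambda>i j. f (i, j)) ^ 2" if "maps_into_unit_ball k X T'" for T'
      using f(2)[OF restrict_in_unit_ball_maps[OF that]] by (simp only: det_restrict)
  qed
qed

lemma one_plus_power_mult_le_one: "0 \<le> (y::real) \<Longrightarrow> (1 + y) ^ n * (1 - real n * y) \<le> 1"
proof (induction n)
  case (Suc n)
  have "(1 + y) ^ Suc n * (1 - real (Suc n) * y) = (1 + y) ^ n * ((1 - real n * y) - (real n + 1) * y\<^sup>2)"
    by (simp add: algebra_simps power2_eq_square)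
  also have "\<dots> \<le> (1 + y) ^ n * (1 - real n * y)"
    using Suc.prems by (intro mult_left_mono) auto
  also have "\<dots> \<le> 1"
    using Suc.IH Suc.prems .
  finally show ?case .
qed simp

lemma exists_power_gain:
  fixes c :: real
  assumes c: "0 \<le> c" and kc: "real k * c < 1"
  obtains x where "0 < x" "(1 + x * c) ^ k < 1 + x"
proof
  define x where "x = (1 - real k * c) / (1 + real k * c)"
  have kc0: "0 \<le> real k * c"
    using c by simp
  show x: "0 < x"
    unfolding x_def using kc kc0 by simp
  have kcx: "real k * c * (1 + x) < 1"
  proof -
    have "real k * c * (1 + x) = 2 * (real k * c) / (1 + real k * c)"
      unfolding x_def using kc0 by (simp add: field_simps)
    also have "\<dots> < 1"
      using kc kc0 by (simp add: divide_less_eq mult.commute)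
    finally show ?thesis .
  qed
  have ky: "real k * (x * c) < 1"
    using kcx x kc0 by (smt (verit) mult_left_mono mult.commute mult.left_commute)
  have "(1 + x * c) ^ k * (1 - real k * (x * c)) \<le> 1"
    using c x by (intro one_plus_power_mult_le_one) simp
  also have "1 < (1 + x) * (1 - real k * (x * c))"
  proof -
    have "(1 + x) * (1 - real k * (x * c)) = 1 + x * (1 - real k * c * (1 + x))"
      by (simp add: algebra_simps)
    thus ?thesis
      using x kcx by simp
  qed
  finally show "(1 + x * c) ^ k < 1 + x"
    using ky by simp
qed

lemma unit_ball_map_det_increase:
  assumes k: "0 < k" and fin: "finite X" and ne: "X \<noteq> {}"
    and T: "maps_into_unit_ball k X T" "det_fun k T \<noteq> 0"
    and e: "dotp k e e = 1" and small: "\<And>x. x \<in> X \<Longrightarrow> real k * (dotp k e (mat_app k T x))\<^sup>2 < 1"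
  obtains T' where "maps_into_unit_ball k X T'" "det_fun k T ^ 2 < det_fun k T' ^ 2"
proof -
  define c where "c = Max ((\<lambda>x. (dotp k e (mat_app k T x))\<^sup>2) ` X)"
  have c_ge: "(dotp k e (mat_app k T x))\<^sup>2 \<le> c" if "x \<in> X" for x
    unfolding c_def using fin that by simp
  have "c \<in> (\<lambda>x. (dotp k e (mat_app k T x))\<^sup>2) ` X"
    unfolding c_def using fin ne by (intro Max_in) auto
  then obtain xm where xm: "xm \<in> X" "c = (dotp k e (mat_app k T xm))\<^sup>2"
    by blast
  have c0: "0 \<le> c"
    using xm by simp
  obtain x0 where x0: "0 < x0" "(1 + x0 * c) ^ k < 1 + x0"
    using exists_power_gain[OF c0] small[OF xm(1)] xm(2) by blast
  have pos: "0 < 1 + x0 * c"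
    using x0 c0 by (simp add: add_pos_nonneg)
  define a where "a = 1 / (1 + x0 * c)"
  have a: "0 < a"
    unfolding a_def using pos by simp
  \<comment> \<open>stretching by 1 + x0 along e and shrinking by a keeps the map feasible and multiplies
    its squared determinant by a ^ k * (1 + x0) > 1\<close>
  obtain N where N: "det_fun k N ^ 2 = a ^ k * (1 + x0)"
    "\<And>y. dotp k (mat_app k N y) (mat_app k N y) = a * (dotp k y y + x0 * (dotp k e y)\<^sup>2)"
    using exists_stretch_along[OF k e a, of "1 + x0"] x0 by auto
  show ?thesis
  proof (rule that[of "mat_prod k N T"])
    show "maps_into_unit_ball k X (mat_prod k N T)"
      unfolding maps_into_unit_ball_def
    proof
      fix x assume x: "x \<in> X"
      have "dotp k (mat_app k (mat_prod k N T) x) (mat_app k (mat_prod k N T) x)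
          = a * (dotp k (mat_app k T x) (mat_app k T x) + x0 * (dotp k e (mat_app k T x))\<^sup>2)"
        unfolding mat_app_mat_prod N(2) ..
      also have "\<dots> \<le> a * (1 + x0 * c)"
        using T(1) x c_ge[OF x] a x0 unfolding maps_into_unit_ball_def
        by (intro mult_left_mono add_mono) auto
      also have "\<dots> = 1"
        unfolding a_def using pos by simp
      finally show "dotp k (mat_app k (mat_prod k N T) x) (mat_app k (mat_prod k N T) x) \<le> 1" .
    qed
    have "1 < a ^ k * (1 + x0)"
      unfolding a_def using x0 pos by (simp add: power_one_over field_simps)
    hence "det_fun k T ^ 2 < a ^ k * (1 + x0) * det_fun k T ^ 2"
      using T(2) by simp
    also have "\<dots> = det_fun k (mat_prod k N T) ^ 2"
      by (simp add: det_fun_mat_prod N(1) power_mult_distrib)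
    finally show "det_fun k T ^ 2 < det_fun k (mat_prod k N T) ^ 2" .
  qed
qed

lemma john_position:
  fixes X :: "(nat \<Rightarrow> real) set"
  assumes k: "0 < k" and fin: "finite X" and eps: "0 < \<epsilon>"
    and basis: "\<And>j. j < k \<Longrightarrow> (\<lambda>i. if i = j then \<epsilon> else 0) \<in> X"
    and T0: "maps_into_unit_ball k X T0" "det_fun k T0 \<noteq> 0"
  obtains T where "maps_into_unit_ball k X T" "det_fun k T \<noteq> 0"
    "\<And>z. \<exists>x\<in>X. dotp k z z \<le> real k * (dotp k (mat_app k T x) z)\<^sup>2"
proof -
  obtain T where T: "maps_into_unit_ball k X T"
    and T_max: "\<And>T'. maps_into_unit_ball k X T' \<Longrightarrow> det_fun k T' ^ 2 \<le> det_fun k T ^ 2"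
    using max_det_unit_ball_map_exists[OF k eps basis T0(1)] by blast
  have "0 < det_fun k T0 ^ 2"
    using T0(2) by simp
  hence det: "det_fun k T \<noteq> 0"
    using T_max[OF T0(1)] by auto
  have ne: "X \<noteq> {}"
    using basis[OF k] by blast
  have "\<exists>x\<in>X. dotp k z z \<le> real k * (dotp k (mat_app k T x) z)\<^sup>2" for z
  proof (rule ccontr)
    assume "\<not> ?thesis"
    hence lt: "\<And>x. x \<in> X \<Longrightarrow> real k * (dotp k (mat_app k T x) z)\<^sup>2 < dotp k z z"
      by force
    obtain x1 where "x1 \<in> X"
      using ne by blast
    have z: "0 < dotp k z z"
      using lt[OF \<open>x1 \<in> X\<close>] by (smt (verit) mult_nonneg_nonneg of_nat_0_le_iff zero_le_power2)
    define e where "e = (\<lambda>i. z i / sqrt (dotp k z z))"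
    have dotp_e: "dotp k e y = dotp k z y / sqrt (dotp k z z)" for y
      unfolding dotp_def e_def by (simp add: sum_divide_distrib)
    have "dotp k e e = 1"
      using z by (simp add: dotp_e dotp_commute[of k z e] power2_eq_square[symmetric])
    moreover have "real k * (dotp k e (mat_app k T x))\<^sup>2 < 1" if "x \<in> X" for x
      using lt[OF that] z by (simp add: dotp_e dotp_commute power_divide)
    ultimately obtain T' where T': "maps_into_unit_ball k X T'" "det_fun k T ^ 2 < det_fun k T' ^ 2"
      using unit_ball_map_det_increase[OF k fin ne T det] by blast
    thus False
      using T_max[OF T'(1)] by linarith
  qed
  with T det show ?thesis
    using that by blast
qed

section \<open>The max norm\<close>

lemma two_inf_nonneg: "0 \<le> two_inf k (U :: 'r::finite \<Rightarrow> nat \<Rightarrow> real)"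
  unfolding two_inf_def by (rule order.trans[OF _ Max_ge[of _ "sqrt (\<Sum>i<k. (U undefined i)\<^sup>2)"]])
    (auto intro: sum_nonneg)

lemma two_inf_leI: "(\<And>x. sqrt (\<Sum>i<k. (U x i)\<^sup>2) \<le> c) \<Longrightarrow> two_inf k (U :: 'r::finite \<Rightarrow> nat \<Rightarrow> real) \<le> c"
  unfolding two_inf_def by (rule Max.boundedI) auto

lemma row_norm_le_two_inf: "sqrt (\<Sum>i<k. (U x i)\<^sup>2) \<le> two_inf k (U :: 'r::finite \<Rightarrow> nat \<Rightarrow> real)"
  unfolding two_inf_def by (rule Max_ge) auto

lemma maxnorm_le_factorization:
  fixes M :: "'s::finite \<Rightarrow> 'a::finite \<Rightarrow> real"
  assumes "\<forall>s a. M s a = (\<Sum>i<k. U s i * V a i)"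
  shows "maxnorm M \<le> two_inf k U * two_inf k V"
  unfolding maxnorm_def
proof (rule cInf_lower)
  show "bdd_below {two_inf k U * two_inf k V | k U V. \<forall>s a. M s a = (\<Sum>i<k. U s i * V a i)}"
    by (rule bdd_belowI[of _ 0]) (auto intro!: mult_nonneg_nonneg two_inf_nonneg)
qed (use assms in blast)

lemma maxnorm_zero_le:
  fixes M :: "'s::finite \<Rightarrow> 'a::finite \<Rightarrow> real"
  assumes "\<forall>s a. M s a = 0"
  shows "maxnorm M \<le> 0"
  using maxnorm_le_factorization[where k = 0 and U = "\<lambda>_ _. 0" and V = "\<lambda>_ _. 0"] assms by (simp add: two_inf_def)

lemma rank_factorization:
  fixes R :: "'s::finite \<Rightarrow> 'a::finite \<Rightarrow> real"
  assumes "rank (mat_of R) \<le> q"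
  obtains u v where "\<forall>s a. R s a = (\<Sum>i<q. u s i * v a i)"
proof -
  define Rw where "Rw = Finite_Cartesian_Product.rows (mat_of R)"
  obtain B where B: "B \<subseteq> Rw" "independent B" "Rw \<subseteq> span B" "card B = dim Rw"
    using basis_exists[of Rw] by blast
  have finB: "finite B"
    using independent_bound[OF B(2)] by simp
  have cardB: "card B \<le> q"
    using assms B(4) unfolding Rw_def row_rank_def by simp
  have "(\<chi> a. R s a) \<in> Rw" for s
  proof -
    have "Finite_Cartesian_Product.row s (mat_of R) = (\<chi> a. R s a)"
      unfolding Finite_Cartesian_Product.row_def mat_of_def by simp
    thus ?thesis
      unfolding Rw_def Finite_Cartesian_Product.rows_def by (intro CollectI exI[of _ s]) simp
  qed
  hence "\<forall>s. \<exists>c. (\<chi> a. R s a) = (\<Sum>b\<in>B. c b *\<^sub>R b)"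
    using B(3) unfolding real_vector.span_finite[OF finB] by blast
  then obtain c where c: "\<And>s. (\<chi> a. R s a) = (\<Sum>b\<in>B. c s b *\<^sub>R b)"
    by metis
  obtain h where h: "bij_betw h {..<card B} B"
    using ex_bij_betw_nat_finite[OF finB] by (auto simp: atLeast0LessThan)
  define u where "u = (\<lambda>s i. if i < card B then c s (h i) else 0)"
  define v where "v = (\<lambda>a i. if i < card B then h i $ a else 0)"
  have "R s a = (\<Sum>i<q. u s i * v a i)" for s a
  proof -
    have "R s a = (\<Sum>b\<in>B. c s b * b $ a)"
      using arg_cong[OF c[of s], of "\<lambda>x. x $ a"] by (simp add: sum_component)
    also have "\<dots> = (\<Sum>i<card B. u s i * v a i)"
      unfolding sum.reindex_bij_betw[OF h, symmetric] u_def v_def by simp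
    also have "\<dots> = (\<Sum>i<q. u s i * v a i)"
      using cardB by (intro sum.mono_neutral_left) (auto simp: u_def)
    finally show ?thesis .
  qed
  thus ?thesis
    using that by blast
qed

lemma exists_factorization:
  fixes M :: "'s::finite \<Rightarrow> 'a::finite \<Rightarrow> real"
  shows "\<exists>(k::nat) U V. \<forall>s a. M s a = (\<Sum>i<k. U s i * V a i)"
proof -
  obtain u v where "\<forall>s a. M s a = (\<Sum>i<rank (mat_of M). u s i * v a i)"
    using rank_factorization[of M "rank (mat_of M)"] by blast
  thus ?thesis
    by blast
qed

lemma maxnorm_nonneg: "0 \<le> maxnorm (M :: 's::finite \<Rightarrow> 'a::finite \<Rightarrow> real)"
  unfolding maxnorm_def
  using exists_factorization[of M] by (intro cInf_greatest) (auto intro!: mult_nonneg_nonneg two_inf_nonneg)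

lemma factorization_add:
  fixes m n :: nat
  assumes "\<forall>s a. M1 s a = (\<Sum>i<m. u1 s i * v1 a i)" "\<forall>s a. M2 s a = (\<Sum>i<n. u2 s i * v2 a i)"
  obtains u v where "\<forall>s a. M1 s a + M2 s a = (\<Sum>i<m + n. u s i * v a i)"
proof
  define u where "u s i = (if i < m then u1 s i else u2 s (i - m))" for s i
  define v where "v a i = (if i < m then v1 a i else v2 a (i - m))" for a i
  have "(\<Sum>i<m + n. u s i * v a i) = (\<Sum>i<m. u s i * v a i) + (\<Sum>i<n. u s (m + i) * v a (m + i))" for s a
    by (induct n) (simp_all add: ac_simps)
  thus "\<forall>s a. M1 s a + M2 s a = (\<Sum>i<m + n. u s i * v a i)"
    using assms by (simp add: u_def v_def)
qed

lemma maxnorm_le_via_john: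
  fixes Y :: "'s::finite \<Rightarrow> 'a::finite \<Rightarrow> real"
  assumes Y: "\<And>s a. Y s a = dotp k (u s) (v a)"
    and X: "range u \<subseteq> X" and T: "maps_into_unit_ball k X T" "det_fun k T \<noteq> 0"
    and john: "\<And>z. \<exists>x\<in>X. dotp k z z \<le> real k * (dotp k (mat_app k T x) z)\<^sup>2"
    and bound: "\<And>x a. x \<in> X \<Longrightarrow> \<bar>dotp k x (v a)\<bar> \<le> m"
  shows "maxnorm Y \<le> sqrt (real k) * m"
proof -
  obtain B where B: "\<And>x i. i < k \<Longrightarrow> mat_app k B (mat_app k T x) i = x i"
    using left_inverse_if_det_fun_nonzero[OF T(2)] by blast
  \<comment> \<open>Y s a = <T (u s), B' (v a)> for the transpose B' of a left inverse B of T, and John's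
    position bounds the vectors B' (v a)\<close>
  define V where "V a = mat_app k (\<lambda>i j. B j i) (v a)" for a
  have dotp_V: "dotp k (mat_app k T x) (V a) = dotp k x (v a)" for x a
  proof -
    have "dotp k (mat_app k T x) (V a) = dotp k (mat_app k B (mat_app k T x)) (v a)"
      unfolding V_def by (rule dotp_mat_app_transpose[symmetric])
    also have "\<dots> = dotp k x (v a)"
      by (rule dotp_cong) (auto simp: B)
    finally show ?thesis .
  qed
  have m: "0 \<le> m"
    using bound[of "u undefined" undefined] X by fastforce
  have U: "two_inf k (\<lambda>s. mat_app k T (u s)) \<le> 1"
  proof (rule two_inf_leI)
    fix s
    have "(\<Sum>i<k. (mat_app k T (u s) i)\<^sup>2) \<le> 1"
      using T(1) X unfolding maps_into_unit_ball_def dotp_def by (auto simp: power2_eq_square)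
    thus "sqrt (\<Sum>i<k. (mat_app k T (u s) i)\<^sup>2) \<le> 1"
      by simp
  qed
  have V: "two_inf k V \<le> sqrt (real k) * m"
  proof (rule two_inf_leI)
    fix a
    obtain x where x: "x \<in> X" "dotp k (V a) (V a) \<le> real k * (dotp k x (v a))\<^sup>2"
      using john[of "V a"] unfolding dotp_V by blast
    have "(dotp k x (v a))\<^sup>2 \<le> m\<^sup>2"
      using bound[OF x(1)] m by (simp add: abs_le_square_iff[symmetric])
    hence "dotp k (V a) (V a) \<le> real k * m\<^sup>2"
      using x(2) by (meson mult_left_mono of_nat_0_le_iff order_trans)
    hence "(\<Sum>i<k. (V a i)\<^sup>2) \<le> real k * m\<^sup>2"
      by (simp add: dotp_def power2_eq_square)
    hence "sqrt (\<Sum>i<k. (V a i)\<^sup>2) \<le> sqrt (real k * m\<^sup>2)"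
      by (rule real_sqrt_le_mono)
    thus "sqrt (\<Sum>i<k. (V a i)\<^sup>2) \<le> sqrt (real k) * m"
      using m by (simp add: real_sqrt_mult)
  qed
  have "\<forall>s a. Y s a = (\<Sum>i<k. mat_app k T (u s) i * V a i)"
  proof (intro allI)
    fix s a
    have "Y s a = dotp k (mat_app k T (u s)) (V a)"
      by (simp only: Y dotp_V)
    thus "Y s a = (\<Sum>i<k. mat_app k T (u s) i * V a i)"
      by (simp only: dotp_def)
  qed
  hence "maxnorm Y \<le> two_inf k (\<lambda>s. mat_app k T (u s)) * two_inf k V"
    by (rule maxnorm_le_factorization)
  also have "\<dots> \<le> 1 * (sqrt (real k) * m)"
    using U V by (intro mult_mono) (auto intro: two_inf_nonneg)
  finally show ?thesis
    by simp
qed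

lemma exists_scale_le:
  fixes v :: "'a::finite \<Rightarrow> nat \<Rightarrow> real"
  assumes "0 < m"
  obtains \<epsilon> where "0 < \<epsilon>" "\<And>a j. j < k \<Longrightarrow> \<epsilon> * \<bar>v a j\<bar> \<le> m"
proof
  define L where "L = 1 + (\<Sum>a\<in>UNIV. \<Sum>j<k. \<bar>v a j\<bar>)"
  have L1: "1 \<le> L"
    unfolding L_def by (auto intro!: sum_nonneg)
  show "0 < m / L"
    using assms L1 by simp
  fix a j assume "j < k"
  hence "\<bar>v a j\<bar> \<le> (\<Sum>j<k. \<bar>v a j\<bar>)"
    by (intro member_le_sum) auto
  also have "\<dots> \<le> (\<Sum>a\<in>UNIV. \<Sum>j<k. \<bar>v a j\<bar>)"
    by (rule member_le_sum[of _ UNIV "\<lambda>a. \<Sum>j<k. \<bar>v a j\<bar>"]) (auto intro: sum_nonneg)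
  finally have "\<bar>v a j\<bar> \<le> L"
    unfolding L_def by simp
  thus "m / L * \<bar>v a j\<bar> \<le> m"
    using assms L1 by (simp add: field_simps)
qed

lemma maxnorm_le_sqrt_rank:
  fixes Y :: "'s::finite \<Rightarrow> 'a::finite \<Rightarrow> real"
  assumes Y: "\<forall>s a. Y s a = (\<Sum>i<k. u s i * v a i)" and m: "\<forall>s a. \<bar>Y s a\<bar> \<le> m"
  shows "maxnorm Y \<le> sqrt (real k) * m"
proof -
  have m0: "0 \<le> m"
    using m abs_ge_zero order_trans by blast
  show ?thesis
  proof (cases "k = 0 \<or> m = 0")
    case True
    hence "maxnorm Y \<le> 0"
      using Y m by (intro maxnorm_zero_le) auto
    moreover have "0 \<le> sqrt (real k) * m"
      using m0 by simp
    ultimately show ?thesis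
      by linarith
  next
    case False
    with m0 have k: "0 < k" and "0 < m"
      by auto
    \<comment> \<open>the scaled basis vectors make the feasible maps bounded and obey the same bound m\<close>
    obtain \<epsilon> where eps: "0 < \<epsilon>" and eps_v: "\<And>a j. j < k \<Longrightarrow> \<epsilon> * \<bar>v a j\<bar> \<le> m"
      using exists_scale_le[OF \<open>0 < m\<close>] by blast
    define X where "X = range u \<union> (\<lambda>j i. if i = j then \<epsilon> else 0) ` {..<k}"
    have bound: "\<bar>dotp k x (v a)\<bar> \<le> m" if x: "x \<in> X" for x a
    proof (cases "x \<in> range u")
      case True
      then obtain s where "x = u s"
        by blast
      hence "dotp k x (v a) = Y s a"
        using Y by (simp add: dotp_def)
      thus ?thesis
        using m by simp
    next
      case False
      then obtain j where j: "j < k" "x = (\<lambda>i. if i = j then \<epsilon> else 0)"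
        using x unfolding X_def by auto
      hence "dotp k x (v a) = \<epsilon> * v a j"
        unfolding dotp_def by (simp add: if_distrib[of "\<lambda>x. x * _"] cong: if_cong)
      thus ?thesis
        using eps eps_v[OF j(1)] by (simp add: abs_mult)
    qed
    have fin: "finite X"
      unfolding X_def by simp
    have basis: "(\<lambda>i. if i = j then \<epsilon> else 0) \<in> X" if "j < k" for j
      unfolding X_def using that by blast
    obtain T0 where "maps_into_unit_ball k X T0" "det_fun k T0 \<noteq> 0"
      using scaled_id_maps_into_unit_ball[OF fin] by blast
    then obtain T where T: "maps_into_unit_ball k X T" "det_fun k T \<noteq> 0"
      "\<And>z. \<exists>x\<in>X. dotp k z z \<le> real k * (dotp k (mat_app k T x) z)\<^sup>2"
      using john_position[OF k fin eps basis] by blast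
    have "Y s a = dotp k (u s) (v a)" for s a
      using Y by (simp add: dotp_def)
    moreover have "range u \<subseteq> X"
      unfolding X_def by blast
    ultimately show ?thesis
      using T bound by (rule maxnorm_le_via_john)
  qed
qed

lemma entrymax_ge: "\<bar>M s a\<bar> \<le> entrymax M"
proof -
  have "{\<bar>M s a\<bar> |s a. True} = (\<lambda>(s, a). \<bar>M s a\<bar>) ` UNIV"
    by auto
  thus ?thesis
    unfolding entrymax_def by (intro Max_ge) auto
qed

lemma entrymax_le: "(\<And>s a. \<bar>M s a\<bar> \<le> c) \<Longrightarrow> entrymax M \<le> c"
proof -
  have "{\<bar>M s a\<bar> |s a. True} = (\<lambda>(s, a). \<bar>M s a\<bar>) ` UNIV"
    by auto
  thus "(\<And>s a. \<bar>M s a\<bar> \<le> c) \<Longrightarrow> entrymax M \<le> c"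
    unfolding entrymax_def by (intro Max.boundedI) auto
qed

section \<open>Trace duality\<close>

definition frob_inner :: "('s::finite \<Rightarrow> 'a::finite \<Rightarrow> real) \<Rightarrow> ('s \<Rightarrow> 'a \<Rightarrow> real) \<Rightarrow> real" where
  "frob_inner D M = (\<Sum>s\<in>UNIV. \<Sum>a\<in>UNIV. D s a * M s a)"

lemma opnorm_nonneg: "0 \<le> opnorm D"
  unfolding opnorm_def by (rule onorm_pos_le) simp

lemma norm_mat_of_mult_le: "norm (mat_of D *v x) \<le> opnorm D * norm x"
  unfolding opnorm_def by (rule onorm) simp

lemma L2_set_column_norms_le:
  fixes U :: "'r::finite \<Rightarrow> nat \<Rightarrow> real"
  shows "L2_set (\<lambda>i. norm (\<chi> r. U r i)) {..<k} \<le> sqrt (real CARD('r)) * two_inf k U"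
proof -
  have "L2_set (\<lambda>i. norm (\<chi> r. U r i)) {..<k} = sqrt (\<Sum>i<k. \<Sum>r\<in>UNIV. (U r i)\<^sup>2)"
    unfolding L2_set_def norm_vec_def by (simp add: sum_nonneg)
  also have "\<dots> = sqrt (\<Sum>r\<in>UNIV. \<Sum>i<k. (U r i)\<^sup>2)"
    by (subst sum.swap) (rule refl)
  also have "\<dots> \<le> sqrt (\<Sum>r\<in>(UNIV::'r set). (two_inf k U)\<^sup>2)"
  proof (intro real_sqrt_le_mono sum_mono)
    fix r
    have "(sqrt (\<Sum>i<k. (U r i)\<^sup>2))\<^sup>2 \<le> (two_inf k U)\<^sup>2"
      by (intro power_mono row_norm_le_two_inf) (auto intro: sum_nonneg)
    thus "(\<Sum>i<k. (U r i)\<^sup>2) \<le> (two_inf k U)\<^sup>2"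
      by (simp add: sum_nonneg)
  qed
  also have "\<dots> = sqrt (real CARD('r)) * two_inf k U"
    using two_inf_nonneg[of k U] by (simp add: real_sqrt_mult)
  finally show ?thesis .
qed

lemma abs_frob_inner_le_factorization:
  fixes D M :: "'s::finite \<Rightarrow> 'a::finite \<Rightarrow> real"
  assumes M: "\<forall>s a. M s a = (\<Sum>i<k. U s i * V a i)"
  shows "\<bar>frob_inner D M\<bar>
    \<le> opnorm D * sqrt (real CARD('s)) * sqrt (real CARD('a)) * (two_inf k U * two_inf k V)"
proof -
  define u where "u i = (\<chi> s. U s i)" for i
  define v where "v i = (\<chi> a. V a i)" for i
  have "frob_inner D M = (\<Sum>s\<in>UNIV. \<Sum>a\<in>UNIV. \<Sum>i<k. U s i * (D s a * V a i))"
    unfolding frob_inner_def using M by (simp add: sum_distrib_left mult_ac)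
  also have "\<dots> = (\<Sum>i<k. \<Sum>s\<in>UNIV. \<Sum>a\<in>UNIV. U s i * (D s a * V a i))"
    by (subst sum.swap) (simp only: sum.swap[of _ UNIV "{..<k}"])
  also have "\<dots> = (\<Sum>i<k. inner (u i) (mat_of D *v v i))"
    unfolding inner_vec_def u_def v_def mat_of_def matrix_vector_mult_def by (simp add: sum_distrib_left)
  finally have eq: "frob_inner D M = (\<Sum>i<k. inner (u i) (mat_of D *v v i))" .
  have "\<bar>\<Sum>i<k. inner (u i) (mat_of D *v v i)\<bar> \<le> (\<Sum>i<k. norm (u i) * (opnorm D * norm (v i)))"
  proof (rule order.trans[OF sum_abs sum_mono])
    fix i
    show "\<bar>inner (u i) (mat_of D *v v i)\<bar> \<le> norm (u i) * (opnorm D * norm (v i))"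
      using Cauchy_Schwarz_ineq2[of "u i" "mat_of D *v v i"] norm_mat_of_mult_le[of D "v i"]
      by (meson mult_left_mono norm_ge_zero order_trans)
  qed
  also have "\<dots> = opnorm D * (\<Sum>i<k. \<bar>norm (u i)\<bar> * \<bar>norm (v i)\<bar>)"
    by (simp add: sum_distrib_left mult_ac)
  also have "\<dots> \<le> opnorm D * (L2_set (\<lambda>i. norm (u i)) {..<k} * L2_set (\<lambda>i. norm (v i)) {..<k})"
    by (rule mult_left_mono[OF L2_set_mult_ineq opnorm_nonneg])
  also have "\<dots> \<le> opnorm D * ((sqrt (real CARD('s)) * two_inf k U) * (sqrt (real CARD('a)) * two_inf k V))"
    unfolding u_def v_def
    by (intro mult_left_mono[OF _ opnorm_nonneg] mult_mono L2_set_column_norms_le)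
      (auto intro: L2_set_nonneg mult_nonneg_nonneg two_inf_nonneg)
  finally show ?thesis
    unfolding eq by (simp add: mult_ac)
qed

lemma le_mult_cInf:
  fixes x c :: real
  assumes "S \<noteq> {}" "0 \<le> c" "\<And>y. y \<in> S \<Longrightarrow> x \<le> c * y"
  shows "x \<le> c * Inf S"
proof (cases "c = 0")
  case True
  thus ?thesis
    using assms by auto
next
  case False
  with assms(2) have "0 < c"
    by simp
  have "x / c \<le> Inf S"
    using assms(1,3) \<open>0 < c\<close> by (intro cInf_greatest) (auto simp: field_simps mult.commute)
  thus ?thesis
    using \<open>0 < c\<close> by (simp add: field_simps)
qed

lemma abs_frob_inner_le_maxnorm:
  fixes D M :: "'s::finite \<Rightarrow> 'a::finite \<Rightarrow> real"
  shows "\<bar>frob_inner D M\<bar> \<le> opnorm D * sqrt (real CARD('s)) * sqrt (real CARD('a)) * maxnorm M"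
  unfolding maxnorm_def
proof (rule le_mult_cInf)
  show "{two_inf k U * two_inf k V | k U V. \<forall>s a. M s a = (\<Sum>i<k. U s i * V a i)} \<noteq> {}"
    using exists_factorization[of M] by blast
  show "0 \<le> opnorm D * sqrt (real CARD('s)) * sqrt (real CARD('a))"
    by (simp add: opnorm_nonneg)
qed (auto intro: abs_frob_inner_le_factorization)

section \<open>Occupancy measures and Bellman backups\<close>

lemma occ_Suc:
  "1 \<le> t \<Longrightarrow> occ \<mu> P \<pi> (Suc t) s' a'
     = (\<Sum>s\<in>UNIV. \<Sum>a\<in>UNIV. occ \<mu> P \<pi> t s a * P t s a s') * \<pi> (Suc t) s' a'"
  by (cases t) auto

lemma occ_is_dist:
  fixes \<mu> :: "'s::finite \<Rightarrow> real" and \<pi> :: "nat \<Rightarrow> 's \<Rightarrow> 'a::finite \<Rightarrow> real"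
  assumes mu: "\<forall>s. \<mu> s \<ge> 0" "(\<Sum>s\<in>UNIV. \<mu> s) = 1"
    and P: "is_transition H P" and pol: "is_policy H \<pi>"
  shows "t \<in> {1..H} \<Longrightarrow> is_dist (occ \<mu> P \<pi> t)"
proof (induction t)
  case (Suc t)
  have \<pi>: "\<forall>s. (\<forall>a. 0 \<le> \<pi> (Suc t) s a) \<and> (\<Sum>a\<in>UNIV. \<pi> (Suc t) s a) = 1"
    using pol Suc.prems unfolding is_policy_def by blast
  show ?case
  proof (cases "t = 0")
    case True
    thus ?thesis
      using mu \<pi> unfolding is_dist_def by (auto simp: sum_distrib_left[symmetric])
  next
    case False
    hence t: "t \<in> {1..H}" and t1: "1 \<le> t"
      using Suc.prems by auto
    have occ: "\<forall>s a. 0 \<le> occ \<mu> P \<pi> t s a" "(\<Sum>s\<in>UNIV. \<Sum>a\<in>UNIV. occ \<mu> P \<pi> t s a) = 1"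
      using Suc.IH[OF t] unfolding is_dist_def by auto
    have P_t: "\<forall>s a. (\<forall>s'. 0 \<le> P t s a s') \<and> (\<Sum>s'\<in>UNIV. P t s a s') = 1"
      using P t unfolding is_transition_def by blast
    have "(\<Sum>s'\<in>UNIV. \<Sum>a'\<in>UNIV. occ \<mu> P \<pi> (Suc t) s' a')
        = (\<Sum>s'\<in>UNIV. \<Sum>s\<in>UNIV. \<Sum>a\<in>UNIV. occ \<mu> P \<pi> t s a * P t s a s')"
      using \<pi> by (simp add: occ_Suc[OF t1] sum_distrib_left[symmetric])
    also have "\<dots> = (\<Sum>s\<in>UNIV. \<Sum>a\<in>UNIV. \<Sum>s'\<in>UNIV. occ \<mu> P \<pi> t s a * P t s a s')"
      by (subst sum.swap) (rule sum.cong[OF refl], rule sum.swap)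
    also have "\<dots> = (\<Sum>s\<in>UNIV. \<Sum>a\<in>UNIV. occ \<mu> P \<pi> t s a * (\<Sum>s'\<in>UNIV. P t s a s'))"
      by (simp only: sum_distrib_left)
    also have "\<dots> = 1"
      using occ(2) P_t by simp
    finally have "(\<Sum>s'\<in>UNIV. \<Sum>a'\<in>UNIV. occ \<mu> P \<pi> (Suc t) s' a') = 1" .
    moreover have "0 \<le> occ \<mu> P \<pi> (Suc t) s' a'" for s' a'
      unfolding occ_Suc[OF t1]
      using occ(1) P_t \<pi> by (intro mult_nonneg_nonneg sum_nonneg) auto
    ultimately show ?thesis
      unfolding is_dist_def by blast
  qed
qed simp

definition policy_value :: "('s::finite \<Rightarrow> 'a::finite \<Rightarrow> real) \<Rightarrow> ('s \<Rightarrow> 'a \<Rightarrow> real) \<Rightarrow> 's \<Rightarrow> real" where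
  "policy_value \<pi> Q s = (\<Sum>a\<in>UNIV. \<pi> s a * Q s a)"

definition bellman_backup :: "('s::finite \<Rightarrow> 'a \<Rightarrow> 's \<Rightarrow> real) \<Rightarrow> ('s \<Rightarrow> 'a \<Rightarrow> real) \<Rightarrow> ('s \<Rightarrow> real)
    \<Rightarrow> 's \<Rightarrow> 'a \<Rightarrow> real" where
  "bellman_backup P r V s a = r s a + (\<Sum>s'\<in>UNIV. P s a s' * V s')"

lemma bellman_backup_policy_value:
  "bellman_backup P r (policy_value \<pi> Q)
     = (\<lambda>s a. r s a + (\<Sum>s'\<in>UNIV. \<Sum>a'\<in>UNIV. P s a s' * \<pi> s' a' * Q s' a'))"
  unfolding bellman_backup_def policy_value_def by (simp add: sum_distrib_left mult.assoc)

lemma frob_inner_occ_Suc: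
  assumes "1 \<le> t"
  shows "frob_inner (occ \<mu> P \<pi> (Suc t)) Q
    = frob_inner (occ \<mu> P \<pi> t) (\<lambda>s a. \<Sum>s'\<in>UNIV. P t s a s' * policy_value (\<pi> (Suc t)) Q s')"
proof -
  have "frob_inner (occ \<mu> P \<pi> t) (\<lambda>s a. \<Sum>s'\<in>UNIV. P t s a s' * policy_value (\<pi> (Suc t)) Q s')
      = (\<Sum>s\<in>UNIV. \<Sum>a\<in>UNIV. \<Sum>s'\<in>UNIV. occ \<mu> P \<pi> t s a * P t s a s' * policy_value (\<pi> (Suc t)) Q s')"
    unfolding frob_inner_def by (simp add: sum_distrib_left mult.assoc)
  also have "\<dots> = (\<Sum>s'\<in>UNIV. \<Sum>s\<in>UNIV. \<Sum>a\<in>UNIV. occ \<mu> P \<pi> t s a * P t s a s' * policy_value (\<pi> (Suc t)) Q s')"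
    by (subst sum.swap) (rule sum.cong[OF refl], rule sum.swap)
  also have "\<dots> = (\<Sum>s'\<in>UNIV. (\<Sum>s\<in>UNIV. \<Sum>a\<in>UNIV. occ \<mu> P \<pi> t s a * P t s a s') * policy_value (\<pi> (Suc t)) Q s')"
    by (simp add: sum_distrib_right)
  also have "\<dots> = frob_inner (occ \<mu> P \<pi> (Suc t)) Q"
    unfolding frob_inner_def policy_value_def occ_Suc[OF assms] by (simp add: sum_distrib_left mult.assoc)
  finally show ?thesis ..
qed

lemma value_error_telescope:
  assumes "Q (H + 1) = (\<lambda>s a. 0)"
  shows "(\<Sum>s\<in>UNIV. \<Sum>a\<in>UNIV. \<mu> s * \<pi> 1 s a * Q 1 s a) - Jval H \<mu> P r \<pi>
    = (\<Sum>t=1..H. frob_inner (occ \<mu> P \<pi> t)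
         (\<lambda>s a. Q t s a - bellman_backup (P t) (r t) (policy_value (\<pi> (t + 1)) (Q (t + 1))) s a))"
proof -
  define G where "G t = frob_inner (occ \<mu> P \<pi> t) (Q t)" for t
  have "frob_inner (occ \<mu> P \<pi> t)
          (\<lambda>s a. Q t s a - bellman_backup (P t) (r t) (policy_value (\<pi> (t + 1)) (Q (t + 1))) s a)
      = (G t - G (Suc t)) - frob_inner (occ \<mu> P \<pi> t) (r t)" if "t \<in> {1..H}" for t
  proof -
    have "G (Suc t) = frob_inner (occ \<mu> P \<pi> t)
        (\<lambda>s a. \<Sum>s'\<in>UNIV. P t s a s' * policy_value (\<pi> (t + 1)) (Q (t + 1)) s')"
      unfolding G_def using frob_inner_occ_Suc[of t] that by simp
    thus ?thesis
      unfolding G_def bellman_backup_def frob_inner_def by (simp add: algebra_simps sum_subtractf sum.distrib)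
  qed
  hence "(\<Sum>t=1..H. frob_inner (occ \<mu> P \<pi> t)
          (\<lambda>s a. Q t s a - bellman_backup (P t) (r t) (policy_value (\<pi> (t + 1)) (Q (t + 1))) s a))
      = (\<Sum>t=1..H. G t - G (Suc t)) - Jval H \<mu> P r \<pi>"
    unfolding Jval_def frob_inner_def by (simp add: sum_subtractf)
  also have "(\<Sum>t=1..H. G t - G (Suc t)) = G 1 - G (Suc H)"
    using sum_Suc_diff[of 1 H G] sum_negf[of "\<lambda>t. G (Suc t) - G t" "{1..H}"] by simp
  also have "G (Suc H) = 0"
    using assms unfolding G_def frob_inner_def by simp
  also have "G 1 = (\<Sum>s\<in>UNIV. \<Sum>a\<in>UNIV. \<mu> s * \<pi> 1 s a * Q 1 s a)"
    unfolding G_def frob_inner_def by simp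
  finally show ?thesis
    by simp
qed

lemma abs_convex_sum_le:
  fixes w f :: "'x \<Rightarrow> real"
  assumes "finite A" "\<forall>x\<in>A. 0 \<le> w x" "sum w A = 1" "\<forall>x\<in>A. \<bar>f x\<bar> \<le> c"
  shows "\<bar>\<Sum>x\<in>A. w x * f x\<bar> \<le> c"
proof -
  have "\<bar>\<Sum>x\<in>A. w x * f x\<bar> \<le> (\<Sum>x\<in>A. w x * c)"
    using assms by (intro order.trans[OF sum_abs sum_mono]) (simp add: abs_mult mult_left_mono)
  also have "\<dots> = c"
    using assms(3) by (simp add: sum_distrib_right[symmetric])
  finally show ?thesis .
qed

lemma abs_policy_value_le:
  assumes "\<forall>a. 0 \<le> \<pi> s a" "(\<Sum>a\<in>UNIV. \<pi> s a) = 1" "\<forall>a. \<bar>Q s a\<bar> \<le> c"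
  shows "\<bar>policy_value \<pi> Q s\<bar> \<le> c"
  unfolding policy_value_def using assms by (intro abs_convex_sum_le) auto

lemma entrymax_bellman_backup_le:
  assumes P: "\<forall>s a. (\<forall>s'. 0 \<le> P s a s') \<and> (\<Sum>s'\<in>UNIV. P s a s') = 1"
    and r: "\<forall>s a. 0 \<le> r s a \<and> r s a \<le> 1" and V: "\<forall>s'. \<bar>V s'\<bar> \<le> c"
  shows "entrymax (bellman_backup P r V) \<le> 1 + c"
proof (rule entrymax_le)
  fix s a
  have "\<bar>\<Sum>s'\<in>UNIV. P s a s' * V s'\<bar> \<le> c"
    using P V by (intro abs_convex_sum_le) auto
  thus "\<bar>bellman_backup P r V s a\<bar> \<le> 1 + c"
    using r unfolding bellman_backup_def by (smt (verit))
qed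

lemma entrymax_backup_of_estimates_le:
  assumes P: "is_transition H P" and r: "\<forall>t\<in>{1..H}. \<forall>s a. 0 \<le> r t s a \<and> r t s a \<le> 1"
    and \<pi>: "is_policy H \<pi>" and Q_last: "Q (H + 1) = (\<lambda>s a. 0)"
    and Q: "\<forall>t\<in>{1..H}. entrymax (Q t) \<le> real (H - t + 1)" and t: "t \<in> {1..H}"
  shows "entrymax (bellman_backup (P t) (r t) (policy_value (\<pi> (t + 1)) (Q (t + 1)))) \<le> real (H - t + 1)"
proof -
  have "\<bar>policy_value (\<pi> (t + 1)) (Q (t + 1)) s\<bar> \<le> real (H - t)" for s
  proof (cases "t = H")
    case True
    \<comment> \<open>\<pi> (H + 1) need not be a policy, but it only ever weighs Q (H + 1) = 0\<close>
    thus ?thesis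
      using Q_last by (simp add: policy_value_def)
  next
    case False
    hence t1: "t + 1 \<in> {1..H}"
      using t by auto
    hence "\<bar>Q (t + 1) s a\<bar> \<le> real (H - t)" for a
      using entrymax_ge[of "Q (t + 1)" s a] Q False by (fastforce simp: Suc_diff_Suc)
    thus ?thesis
      using \<pi> t1 unfolding is_policy_def by (intro abs_policy_value_le) auto
  qed
  hence "entrymax (bellman_backup (P t) (r t) (policy_value (\<pi> (t + 1)) (Q (t + 1)))) \<le> 1 + real (H - t)"
    using P r t unfolding is_transition_def by (intro entrymax_bellman_backup_le) auto
  thus ?thesis
    using t by simp
qed

lemma expected_value_factorization:
  fixes P :: "'s::finite \<Rightarrow> 'a::finite \<Rightarrow> 's \<Rightarrow> real" and m :: nat
  assumes "(\<exists>u w. \<forall>s' s a. P s a s' = (\<Sum>i=1..m. u i s' s * w i a)) \<or>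
           (\<exists>u w. \<forall>s' s a. P s a s' = (\<Sum>i=1..m. u i s * w i s' a))"
  obtains U W where "\<forall>s a. (\<Sum>s'\<in>UNIV. P s a s' * V s') = (\<Sum>i<m. U s i * W a i)"
  using assms
proof
  assume "\<exists>u w. \<forall>s' s a. P s a s' = (\<Sum>i=1..m. u i s' s * w i a)"
  then obtain u w where uw: "\<forall>s' s a. P s a s' = (\<Sum>i=1..m. u i s' s * w i a)"
    by blast
  have eq: "(\<Sum>s'\<in>UNIV. P s a s' * V s') = (\<Sum>i<m. (\<Sum>s'\<in>UNIV. u (Suc i) s' s * V s') * w (Suc i) a)" for s a
  proof -
    have "(\<Sum>s'\<in>UNIV. P s a s' * V s') = (\<Sum>s'\<in>UNIV. \<Sum>i<m. u (Suc i) s' s * V s' * w (Suc i) a)"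
      using uw by (simp add: sum.atLeast1_atMost_eq sum_distrib_left mult_ac)
    also have "\<dots> = (\<Sum>i<m. (\<Sum>s'\<in>UNIV. u (Suc i) s' s * V s') * w (Suc i) a)"
      by (subst sum.swap) (simp add: sum_distrib_right)
    finally show ?thesis .
  qed
  show ?thesis
    by (rule that[of "\<lambda>s i. \<Sum>s'\<in>UNIV. u (Suc i) s' s * V s'" "\<lambda>a i. w (Suc i) a"]) (simp add: eq)
next
  assume "\<exists>u w. \<forall>s' s a. P s a s' = (\<Sum>i=1..m. u i s * w i s' a)"
  then obtain u w where uw: "\<forall>s' s a. P s a s' = (\<Sum>i=1..m. u i s * w i s' a)"
    by blast
  have eq: "(\<Sum>s'\<in>UNIV. P s a s' * V s') = (\<Sum>i<m. u (Suc i) s * (\<Sum>s'\<in>UNIV. w (Suc i) s' a * V s'))" for s a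
  proof -
    have "(\<Sum>s'\<in>UNIV. P s a s' * V s') = (\<Sum>s'\<in>UNIV. \<Sum>i<m. u (Suc i) s * (w (Suc i) s' a * V s'))"
      using uw by (simp add: sum.atLeast1_atMost_eq sum_distrib_left mult_ac)
    also have "\<dots> = (\<Sum>i<m. u (Suc i) s * (\<Sum>s'\<in>UNIV. w (Suc i) s' a * V s'))"
      by (subst sum.swap) (simp add: sum_distrib_left)
    finally show ?thesis .
  qed
  show ?thesis
    by (rule that[of "\<lambda>s i. u (Suc i) s" "\<lambda>a i. \<Sum>s'\<in>UNIV. w (Suc i) s' a * V s'"]) (simp add: eq)
qed

lemma bellman_backup_factorization:
  fixes P :: "nat \<Rightarrow> 's::finite \<Rightarrow> 'a::finite \<Rightarrow> 's \<Rightarrow> real"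
  assumes "low_rank d H P r" "t \<in> {1..H}"
  obtains k U W where "k \<le> d" "\<forall>s a. bellman_backup (P t) (r t) V s a = (\<Sum>i<k. U s i * W a i)"
proof -
  have r: "rank (mat_of (r t)) \<le> d div 2"
    and P: "(\<exists>u w. \<forall>s' s a. P t s a s' = (\<Sum>i=1..d div 2. u i s' s * w i a)) \<or>
            (\<exists>u w. \<forall>s' s a. P t s a s' = (\<Sum>i=1..d div 2. u i s * w i s' a))"
    using assms unfolding low_rank_def by auto
  obtain u1 v1 where "\<forall>s a. r t s a = (\<Sum>i<d div 2. u1 s i * v1 a i)"
    using rank_factorization[OF r] by blast
  moreover obtain u2 v2 where "\<forall>s a. (\<Sum>s'\<in>UNIV. P t s a s' * V s') = (\<Sum>i<d div 2. u2 s i * v2 a i)"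
    using expected_value_factorization[OF P] by blast
  ultimately obtain U W where "\<forall>s a. bellman_backup (P t) (r t) V s a = (\<Sum>i<d div 2 + d div 2. U s i * W a i)"
    unfolding bellman_backup_def by (rule factorization_add)
  moreover have "d div 2 + d div 2 \<le> d"
    by linarith
  ultimately show ?thesis
    using that by blast
qed

lemma bellman_backup_maxnorm_le:
  fixes P :: "nat \<Rightarrow> 's::finite \<Rightarrow> 'a::finite \<Rightarrow> 's \<Rightarrow> real"
  assumes "low_rank d H P r" "t \<in> {1..H}" "entrymax (bellman_backup (P t) (r t) V) \<le> m"
  shows "maxnorm (bellman_backup (P t) (r t) V) \<le> sqrt (real d) * m"
proof -
  obtain k U W where k: "k \<le> d" and fact: "\<forall>s a. bellman_backup (P t) (r t) V s a = (\<Sum>i<k. U s i * W a i)"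
    using bellman_backup_factorization[OF assms(1,2)] by blast
  have "\<forall>s a. \<bar>bellman_backup (P t) (r t) V s a\<bar> \<le> m"
    using entrymax_ge assms(3) order_trans by blast
  hence "maxnorm (bellman_backup (P t) (r t) V) \<le> sqrt (real k) * m"
    using fact by (intro maxnorm_le_sqrt_rank)
  also have "\<dots> \<le> sqrt (real d) * m"
    using k \<open>\<forall>s a. \<bar>bellman_backup (P t) (r t) V s a\<bar> \<le> m\<close>
    by (intro mult_right_mono) (auto intro: order_trans[OF abs_ge_zero])
  finally show ?thesis .
qed

lemma ME_inf_error_le_Dis:
  fixes \<rho> q Y :: "'s::finite \<Rightarrow> 'a::finite \<Rightarrow> real"
  assumes ME: "ME_inf \<rho> Z c M" and \<rho>: "is_dist \<rho>" and Z: "\<forall>(s, a)\<in>supp \<rho>. Z s a = Y s a"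
    and Y: "entrymax Y \<le> c" "maxnorm Y \<le> B"
  shows "\<bar>frob_inner q (\<lambda>s a. M s a - Y s a)\<bar>
    \<le> 2 * B * sqrt (real CARD('s)) * sqrt (real CARD('a)) * Dis \<rho> q"
proof -
  have agree: "\<forall>(s, a)\<in>supp \<rho>. M s a = Y s a" and "maxnorm M \<le> B"
    using ME Z Y unfolding ME_inf_def ME_feasible_def by fastforce+
  define C where "C = 2 * B * sqrt (real CARD('s)) * sqrt (real CARD('a))"
  have "\<bar>frob_inner q (\<lambda>s a. M s a - Y s a)\<bar> \<le> C * opnorm (\<lambda>s a. g s a - q s a)"
    if "supp g \<subseteq> supp \<rho>" for g
  proof -
    define D where "D s a = g s a - q s a" for s a
    have "frob_inner g (\<lambda>s a. M s a - Y s a) = 0"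
      unfolding frob_inner_def using that agree by (intro sum.neutral ballI) (auto simp: supp_def)
    hence eq: "frob_inner q (\<lambda>s a. M s a - Y s a) = frob_inner D Y - frob_inner D M"
      unfolding frob_inner_def D_def by (simp add: algebra_simps sum_subtractf)
    have bound: "\<bar>frob_inner D N\<bar> \<le> opnorm D * sqrt (real CARD('s)) * sqrt (real CARD('a)) * B"
      if "maxnorm N \<le> B" for N :: "'s \<Rightarrow> 'a \<Rightarrow> real"
    proof -
      have "0 \<le> opnorm D * sqrt (real CARD('s)) * sqrt (real CARD('a))"
        by (simp add: opnorm_nonneg)
      thus ?thesis
        using abs_frob_inner_le_maxnorm[of D N] mult_left_mono[OF that] order_trans by blast
    qed
    have "C * opnorm D = 2 * (opnorm D * sqrt (real CARD('s)) * sqrt (real CARD('a)) * B)"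
      unfolding C_def by (simp add: mult_ac)
    thus ?thesis
      unfolding D_def[symmetric] eq using bound[OF Y(2)] bound[OF \<open>maxnorm M \<le> B\<close>] by linarith
  qed
  moreover have "0 \<le> C"
    unfolding C_def using Y(2) maxnorm_nonneg[of Y] by simp
  ultimately show ?thesis
    unfolding Dis_def C_def[symmetric] using \<rho> by (intro le_mult_cInf) auto
qed

theorem theorem1:
  fixes H d :: nat
    and \<mu> :: "'s::finite \<Rightarrow> real"
    and P Phat :: "nat \<Rightarrow> 's \<Rightarrow> 'a::finite \<Rightarrow> 's \<Rightarrow> real"
    and r :: "nat \<Rightarrow> 's \<Rightarrow> 'a \<Rightarrow> real"
    and \<pi>\<theta> \<pi>\<beta> :: "nat \<Rightarrow> 's \<Rightarrow> 'a \<Rightarrow> real"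
    and Qhat :: "nat \<Rightarrow> 's \<Rightarrow> 'a \<Rightarrow> real"
  assumes mu: "\<forall>s. \<mu> s \<ge> 0" "(\<Sum>s\<in>UNIV. \<mu> s) = 1"
    and trans: "is_transition H P"
    and rew: "\<forall>t\<in>{1..H}. \<forall>s a. 0 \<le> r t s a \<and> r t s a \<le> 1"
    and pol: "is_policy H \<pi>\<theta>" "is_policy H \<pi>\<beta>"
    and lowrank: "low_rank d H P r"
    and est: "\<forall>t\<in>{1..H}. \<forall>(s,a)\<in>supp (occ \<mu> P \<pi>\<beta> t). Phat t s a = P t s a"
    and Qlast: "Qhat (H+1) = (\<lambda>s a. 0)"
    and alg: "\<forall>t\<in>{1..H}. ME_inf (occ \<mu> P \<pi>\<beta> t)
               (\<lambda>s a. r t s a + (\<Sum>s'\<in>UNIV. \<Sum>a'\<in>UNIV. Phat t s a s' * \<pi>\<theta> (t+1) s' a' * Qhat (t+1) s' a'))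
               (real (H - t + 1)) (Qhat t)"
  shows "\<bar>(\<Sum>s\<in>UNIV. \<Sum>a\<in>UNIV. \<mu> s * \<pi>\<theta> 1 s a * Qhat 1 s a) - Jval H \<mu> P r \<pi>\<theta>\<bar>
         \<le> 2 * real H * sqrt (real (d * CARD('s) * CARD('a)))
            * (\<Sum>t=1..H. Dis (occ \<mu> P \<pi>\<beta> t) (occ \<mu> P \<pi>\<theta> t))"
proof -
  define Y where "Y t = bellman_backup (P t) (r t) (policy_value (\<pi>\<theta> (t + 1)) (Qhat (t + 1)))" for t
  have ME: "ME_inf (occ \<mu> P \<pi>\<beta> t) (bellman_backup (Phat t) (r t) (policy_value (\<pi>\<theta> (t + 1)) (Qhat (t + 1))))
      (real (H - t + 1)) (Qhat t)" if "t \<in> {1..H}" for t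
    using alg that by (simp add: bellman_backup_policy_value)
  have "\<forall>t\<in>{1..H}. entrymax (Qhat t) \<le> real (H - t + 1)"
    using alg unfolding ME_inf_def ME_feasible_def by blast
  hence Y_entries: "entrymax (Y t) \<le> real (H - t + 1)" if "t \<in> {1..H}" for t
    unfolding Y_def by (rule entrymax_backup_of_estimates_le[where Q = Qhat, OF trans rew pol(1) Qlast _ that])
  have step: "\<bar>frob_inner (occ \<mu> P \<pi>\<theta> t) (\<lambda>s a. Qhat t s a - Y t s a)\<bar>
      \<le> 2 * (sqrt (real d) * real H) * sqrt (real CARD('s)) * sqrt (real CARD('a))
         * Dis (occ \<mu> P \<pi>\<beta> t) (occ \<mu> P \<pi>\<theta> t)" if t: "t \<in> {1..H}" for t
  proof (rule ME_inf_error_le_Dis[OF ME[OF t] occ_is_dist[OF mu trans pol(2) t] _ Y_entries[OF t]])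
    show "\<forall>(s, a)\<in>supp (occ \<mu> P \<pi>\<beta> t).
        bellman_backup (Phat t) (r t) (policy_value (\<pi>\<theta> (t + 1)) (Qhat (t + 1))) s a = Y t s a"
      using bspec[OF est t] unfolding Y_def bellman_backup_def by fastforce
    have "maxnorm (Y t) \<le> sqrt (real d) * real (H - t + 1)"
      using bellman_backup_maxnorm_le[OF lowrank t] Y_entries[OF t] by (simp add: Y_def)
    also have "\<dots> \<le> sqrt (real d) * real H"
      using t by (intro mult_left_mono) auto
    finally show "maxnorm (Y t) \<le> sqrt (real d) * real H" .
  qed
  have "\<bar>(\<Sum>s\<in>UNIV. \<Sum>a\<in>UNIV. \<mu> s * \<pi>\<theta> 1 s a * Qhat 1 s a) - Jval H \<mu> P r \<pi>\<theta>\<bar>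
      \<le> (\<Sum>t=1..H. \<bar>frob_inner (occ \<mu> P \<pi>\<theta> t) (\<lambda>s a. Qhat t s a - Y t s a)\<bar>)"
    unfolding value_error_telescope[where Q = Qhat, OF Qlast] Y_def by (rule sum_abs)
  also have "\<dots> \<le> (\<Sum>t=1..H. 2 * (sqrt (real d) * real H) * sqrt (real CARD('s)) * sqrt (real CARD('a))
      * Dis (occ \<mu> P \<pi>\<beta> t) (occ \<mu> P \<pi>\<theta> t))"
    by (rule sum_mono) (rule step, simp)
  finally show ?thesis
    by (simp add: sum_distrib_left real_sqrt_mult mult_ac)
qed

end
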